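(* Let $f=(f_1,f_2):\mathbb{R}^2\to\mathbb{R}^2$ be a smooth one-generic mapping having a cusp point at the origin with $f(\mathbf{0})=\mathbf{0}$, and suppose that $\frac{\partial f_1}{\partial x}(\mathbf{0})=\frac{\partial f_2}{\partial x}(\mathbf{0})=\frac{\partial f_2}{\partial y}(\mathbf{0})=0$, $\frac{\partial f_1}{\partial y}(\mathbf{0})\ne0$, $\frac{\partial J}{\partial x}(\mathbf{0})=0$, $\frac{\partial J}{\partial y}(\mathbf{0})\ne0$. Let $\varphi:(\mathbb{R},0)\to(\mathbb{R},0)$ be the smooth germ with $J(t,\varphi(t))\equiv0$, and set $$v_1=\frac{d^2}{dt^2}\begin{bmatrix}f_1(t,\varphi(t))\\ f_2(t,\varphi(t))\end{bmatrix}\Big|_{t=0},\qquad v_2=Df(\mathbf{0})\cdot\begin{bmatrix}\frac{\partial J}{\partial x}(\mathbf{0})\\ \frac{\partial J}{\partial y}(\mathbf{0})\end{bmatrix}.$$ Then the local topological degree of the germ $f:(\mathbb{R}^2,\mathbf{0})\to(\mathbb{R}^2,\mathbf{0})$ equals $-1$ if $v_1,v_2$ point in the same direction, and $+1$ if they point in opposite directions.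
   Context: $J=\det Df$. $f$ is one-generic if $dJ\ne0$ on $J^{-1}(0)$ (equivalently, $j^1f$ is transverse to the corank strata). A point $p\in S_1(f)=J^{-1}(0)$ with $T_pS_1(f)=\ker Df(p)$ is a cusp point if it is a simple zero of $dJ(\xi)$ on $S_1(f)$, $\xi$ a nonvanishing vector field along $S_1(f)$ in $\ker Df$. Degrees are with respect to the standard orientation of $\mathbb{R}^2$. *)

theory Defs
  imports "HOL-Complex_Analysis.Complex_Analysis"
begin

definition dx :: "(real \<times> real \<Rightarrow> real) \<Rightarrow> real \<times> real \<Rightarrow> real" where
  "dx g p = deriv (\<lambda>t. g (t, snd p)) (fst p)"

definition dy :: "(real \<times> real \<Rightarrow> real) \<Rightarrow> real \<times> real \<Rightarrow> real" where
  "dy g p = deriv (\<lambda>t. g (fst p, t)) (snd p)"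

text \<open>C-infinity functions of two real variables: differentiable with all
  partial derivatives again C-infinity (coinductively).\<close>

coinductive smooth2 :: "(real \<times> real \<Rightarrow> real) \<Rightarrow> bool" where
  "(\<And>p. (g has_derivative (\<lambda>(h,k). gx p * h + gy p * k)) (at p))
   \<Longrightarrow> smooth2 gx \<Longrightarrow> smooth2 gy \<Longrightarrow> smooth2 g"

coinductive smooth1_on :: "real set \<Rightarrow> (real \<Rightarrow> real) \<Rightarrow> bool" for S where
  "(\<And>t. t \<in> S \<Longrightarrow> (g has_real_derivative g' t) (at t))
   \<Longrightarrow> smooth1_on S g' \<Longrightarrow> smooth1_on S g"

definition jac :: "(real \<times> real \<Rightarrow> real) \<Rightarrow> (real \<times> real \<Rightarrow> real) \<Rightarrow> real \<times> real \<Rightarrow> real" where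
  "jac f1 f2 p = dx f1 p * dy f2 p - dy f1 p * dx f2 p"

definition one_generic :: "(real \<times> real \<Rightarrow> real) \<Rightarrow> (real \<times> real \<Rightarrow> real) \<Rightarrow> bool" where
  "one_generic f1 f2 \<longleftrightarrow>
     (\<forall>p. jac f1 f2 p = 0 \<longrightarrow> (dx (jac f1 f2) p, dy (jac f1 f2) p) \<noteq> (0, 0))"

text \<open>Cusp point p: p lies on S_1(f) = J^{-1}(0); (gamma1,gamma2) is a smooth regular
  local parametrisation of S_1(f) through p (gamma(0) = p); (xi1,xi2) is a smooth
  nonvanishing vector field along S_1(f) lying in ker Df; the tangent line of S_1(f)
  at p equals ker Df(p); and t \<mapsto> dJ(xi) along S_1(f) has a simple zero at p.\<close>

definition cusp_point :: "(real \<times> real \<Rightarrow> real) \<Rightarrow> (real \<times> real \<Rightarrow> real) \<Rightarrow> real \<times> real \<Rightarrow> bool" where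
  "cusp_point f1 f2 p \<longleftrightarrow> jac f1 f2 p = 0 \<and>
    (\<exists>e>0. \<exists>g1 g2 xi1 xi2.
       smooth1_on {-e<..<e} g1 \<and> smooth1_on {-e<..<e} g2 \<and>
       smooth1_on {-e<..<e} xi1 \<and> smooth1_on {-e<..<e} xi2 \<and>
       (g1 0, g2 0) = p \<and>
       (\<forall>t\<in>{-e<..<e}. jac f1 f2 (g1 t, g2 t) = 0) \<and>
       (\<forall>t\<in>{-e<..<e}. (deriv g1 t, deriv g2 t) \<noteq> (0, 0)) \<and>
       (\<forall>t\<in>{-e<..<e}. (xi1 t, xi2 t) \<noteq> (0, 0)) \<and>
       (\<forall>t\<in>{-e<..<e}.
          dx f1 (g1 t, g2 t) * xi1 t + dy f1 (g1 t, g2 t) * xi2 t = 0 \<and>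
          dx f2 (g1 t, g2 t) * xi1 t + dy f2 (g1 t, g2 t) * xi2 t = 0) \<and>
       (\<forall>v1 v2. (dx f1 p * v1 + dy f1 p * v2 = 0 \<and> dx f2 p * v1 + dy f2 p * v2 = 0)
                 \<longleftrightarrow> v1 * deriv g2 0 - v2 * deriv g1 0 = 0) \<and>
       (let h = (\<lambda>t. dx (jac f1 f2) (g1 t, g2 t) * xi1 t + dy (jac f1 f2) (g1 t, g2 t) * xi2 t)
        in h 0 = 0 \<and> deriv h 0 \<noteq> 0))"

text \<open>Local topological degree at the origin of a germ f : (R^2,0) \<rightarrow> (R^2,0):
  the winding number around 0 of the image under f of all sufficiently small
  positively oriented circles centred at 0 (R^2 identified with C, standard orientation).\<close>

definition local_degree :: "(real \<times> real \<Rightarrow> real) \<Rightarrow> (real \<times> real \<Rightarrow> real) \<Rightarrow> int" where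
  "local_degree f1 f2 = (THE d. \<exists>e>0. \<forall>r\<in>{0<..<e}.
      winding_number
        (\<lambda>s. let z = circlepath 0 r s in Complex (f1 (Re z, Im z)) (f2 (Re z, Im z))) 0
      = of_int d)"

end

theory Submission
  imports Defs
begin

text \<open>In the normal form J_x(0) = -f1_y f2_xx and J_y(0) = -f1_y f2_xy, so f2_xx(0) = 0 and
  f2_xy(0) \<noteq> 0.  Near the origin the zero set of f1 lies along the parabola
  y = -f1_xx x^2 / (2 f1_y) + O(x^3), on which f2 = d x^3 + O(x^4) with
  d = f2_xxx/6 - f2_xy f1_xx / (2 f1_y).  Differentiating J(t, \<phi> t) = 0 twice gives
  v1 = (-6 f1_y d / f2_xy, 0), while v2 = (-f1_y^2 f2_xy, 0); hence v1 = c v2 with c of the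
  sign of f1_y d.  Two straight-line homotopies that do not vanish on small circles deform f
  into (f1, d x^3) and then into the linear map (f1_y y, d x), whose degree is -sgn(f1_y d).\<close>

lemma has_real_derivative_partial_x:
  assumes "(g has_derivative (\<lambda>(h, k). P * h + Q * k)) (at (x, y))"
  shows "((\<lambda>t. g (t, y)) has_real_derivative P) (at x)"
proof -
  have "((\<lambda>t. (t, y)) has_derivative (\<lambda>h. (h, 0))) (at x)"
    by (auto intro!: derivative_eq_intros)
  from has_derivative_compose[OF this assms] show ?thesis
    by (simp add: o_def has_field_derivative_def)
qed

lemma has_real_derivative_partial_y:
  assumes "(g has_derivative (\<lambda>(h, k). P * h + Q * k)) (at (x, y))"
  shows "((\<lambda>t. g (x, t)) has_real_derivative Q) (at y)"
proof -
  have "((\<lambda>t. (x, t)) has_derivative (\<lambda>h. (0, h))) (at y)"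
    by (auto intro!: derivative_eq_intros)
  from has_derivative_compose[OF this assms] show ?thesis
    by (simp add: o_def has_field_derivative_def)
qed

lemma dx_eqI: "(g has_derivative (\<lambda>(h, k). P * h + Q * k)) (at p) \<Longrightarrow> dx g p = P"
  using has_real_derivative_partial_x[of g P Q "fst p" "snd p"]
  unfolding dx_def by (auto intro: DERIV_imp_deriv)

lemma dy_eqI: "(g has_derivative (\<lambda>(h, k). P * h + Q * k)) (at p) \<Longrightarrow> dy g p = Q"
  using has_real_derivative_partial_y[of g P Q "fst p" "snd p"]
  unfolding dy_def by (auto intro: DERIV_imp_deriv)

definition total_diff :: "(real \<times> real \<Rightarrow> real) \<Rightarrow> bool" where
  "total_diff g \<longleftrightarrow> (\<forall>p. (g has_derivative (\<lambda>(h, k). dx g p * h + dy g p * k)) (at p))"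

lemma total_diffD: "total_diff g \<Longrightarrow> (g has_derivative (\<lambda>(h, k). dx g p * h + dy g p * k)) (at p)"
  unfolding total_diff_def by blast

lemma total_diffI:
  assumes "\<And>p. (g has_derivative (\<lambda>(h, k). gx p * h + gy p * k)) (at p)"
  shows "total_diff g" "dx g = gx" "dy g = gy"
proof -
  show "dx g = gx" "dy g = gy" using dx_eqI[OF assms] dy_eqI[OF assms] by auto
  then show "total_diff g" unfolding total_diff_def using assms by simp
qed

lemma total_diff_isCont: "total_diff g \<Longrightarrow> isCont g p"
  using total_diffD has_derivative_continuous by blast

lemma total_diff_continuous_on: "total_diff g \<Longrightarrow> continuous_on S g"
  using total_diff_isCont continuous_at_imp_continuous_on by blast

lemma total_diff_partial_x:
  "total_diff g \<Longrightarrow> ((\<lambda>t. g (t, y)) has_real_derivative dx g (x, y)) (at x)"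
  using has_real_derivative_partial_x total_diffD by blast

lemma total_diff_partial_y:
  "total_diff g \<Longrightarrow> ((\<lambda>t. g (x, t)) has_real_derivative dy g (x, y)) (at y)"
  using has_real_derivative_partial_y total_diffD by blast

lemma total_diff_add:
  assumes "total_diff u" "total_diff v"
  shows "total_diff (\<lambda>p. u p + v p)"
    "dx (\<lambda>p. u p + v p) = (\<lambda>p. dx u p + dx v p)" "dy (\<lambda>p. u p + v p) = (\<lambda>p. dy u p + dy v p)"
proof -
  have "((\<lambda>p. u p + v p) has_derivative
      (\<lambda>(h, k). (dx u p + dx v p) * h + (dy u p + dy v p) * k)) (at p)" for p
    by (rule has_derivative_eq_rhs[OF has_derivative_add[OF assms[THEN total_diffD]]])
      (auto simp: algebra_simps)
  from total_diffI[OF this] show "total_diff (\<lambda>p. u p + v p)"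
    "dx (\<lambda>p. u p + v p) = (\<lambda>p. dx u p + dx v p)" "dy (\<lambda>p. u p + v p) = (\<lambda>p. dy u p + dy v p)" .
qed

lemma total_diff_diff:
  assumes "total_diff u" "total_diff v"
  shows "total_diff (\<lambda>p. u p - v p)"
    "dx (\<lambda>p. u p - v p) = (\<lambda>p. dx u p - dx v p)" "dy (\<lambda>p. u p - v p) = (\<lambda>p. dy u p - dy v p)"
proof -
  have "((\<lambda>p. u p - v p) has_derivative
      (\<lambda>(h, k). (dx u p - dx v p) * h + (dy u p - dy v p) * k)) (at p)" for p
    by (rule has_derivative_eq_rhs[OF has_derivative_diff[OF assms[THEN total_diffD]]])
      (auto simp: algebra_simps)
  from total_diffI[OF this] show "total_diff (\<lambda>p. u p - v p)"
    "dx (\<lambda>p. u p - v p) = (\<lambda>p. dx u p - dx v p)" "dy (\<lambda>p. u p - v p) = (\<lambda>p. dy u p - dy v p)" .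
qed

lemma total_diff_mult:
  assumes "total_diff u" "total_diff v"
  shows "total_diff (\<lambda>p. u p * v p)"
    "dx (\<lambda>p. u p * v p) = (\<lambda>p. dx u p * v p + u p * dx v p)"
    "dy (\<lambda>p. u p * v p) = (\<lambda>p. dy u p * v p + u p * dy v p)"
proof -
  have "((\<lambda>p. u p * v p) has_derivative
      (\<lambda>(h, k). (dx u p * v p + u p * dx v p) * h + (dy u p * v p + u p * dy v p) * k)) (at p)" for p
    by (rule has_derivative_eq_rhs[OF has_derivative_mult[OF assms[THEN total_diffD]]])
      (auto simp: algebra_simps)
  from total_diffI[OF this] show "total_diff (\<lambda>p. u p * v p)"
    "dx (\<lambda>p. u p * v p) = (\<lambda>p. dx u p * v p + u p * dx v p)"
    "dy (\<lambda>p. u p * v p) = (\<lambda>p. dy u p * v p + u p * dy v p)" .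
qed

lemma has_real_derivative_along_graph:
  assumes "total_diff F" and "(\<phi> has_real_derivative \<phi>') (at t)"
  shows "((\<lambda>s. F (s, \<phi> s)) has_real_derivative dx F (t, \<phi> t) + dy F (t, \<phi> t) * \<phi>') (at t)"
proof -
  have "((\<lambda>s. (s, \<phi> s)) has_derivative (\<lambda>h. (h, h * \<phi>'))) (at t)"
    using assms(2) unfolding has_field_derivative_def
    by (auto intro!: derivative_eq_intros simp: mult.commute)
  from has_derivative_compose[OF this total_diffD[OF assms(1)]]
  have "((\<lambda>s. F (s, \<phi> s)) has_derivative (\<lambda>h. (dx F (t, \<phi> t) + dy F (t, \<phi> t) * \<phi>') * h)) (at t)"
    by (rule has_derivative_eq_rhs) (auto simp: algebra_simps)
  then show ?thesis by (simp add: has_field_derivative_def)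
qed

lemma smooth2_D:
  assumes "smooth2 g"
  shows "total_diff g" "smooth2 (dx g)" "smooth2 (dy g)"
proof -
  obtain gx gy where d: "\<And>p. (g has_derivative (\<lambda>(h, k). gx p * h + gy p * k)) (at p)"
    and "smooth2 gx" "smooth2 gy"
    using assms by (cases rule: smooth2.cases) auto
  with total_diffI[OF d] show "total_diff g" "smooth2 (dx g)" "smooth2 (dy g)" by auto
qed

lemma smooth2_dx_funpow: "smooth2 g \<Longrightarrow> smooth2 ((dx ^^ n) g)"
  by (induction n) (auto intro: smooth2_D)

lemma smooth2_dy_funpow: "smooth2 g \<Longrightarrow> smooth2 ((dy ^^ n) g)"
  by (induction n) (auto intro: smooth2_D)

lemma eq_if_common_values_nearby:
  fixes u v :: "'a::metric_space \<Rightarrow> real"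
  assumes "isCont u p" "isCont v p"
    and near: "\<And>h. h > 0 \<Longrightarrow> \<exists>q q'. dist q p < h \<and> dist q' p < h \<and> u q = v q'"
  shows "u p = v p"
proof (rule ccontr)
  assume "u p \<noteq> v p"
  define \<epsilon> where "\<epsilon> = \<bar>u p - v p\<bar> / 2"
  have "\<epsilon> > 0" using \<open>u p \<noteq> v p\<close> by (simp add: \<epsilon>_def)
  obtain \<delta>1 where "\<delta>1 > 0" and \<delta>1: "\<And>q. dist q p < \<delta>1 \<Longrightarrow> dist (u q) (u p) < \<epsilon>"
    using assms(1) \<open>\<epsilon> > 0\<close> by (metis continuous_at_eps_delta)
  obtain \<delta>2 where "\<delta>2 > 0" and \<delta>2: "\<And>q. dist q p < \<delta>2 \<Longrightarrow> dist (v q) (v p) < \<epsilon>"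
    using assms(2) \<open>\<epsilon> > 0\<close> by (metis continuous_at_eps_delta)
  obtain q q' where "dist q p < min \<delta>1 \<delta>2" "dist q' p < min \<delta>1 \<delta>2" "u q = v q'"
    using near[of "min \<delta>1 \<delta>2"] \<open>\<delta>1 > 0\<close> \<open>\<delta>2 > 0\<close> by auto
  with \<delta>1[of q] \<delta>2[of q'] have "\<bar>u q - u p\<bar> + \<bar>v q' - v p\<bar> < \<bar>u p - v p\<bar>"
    by (simp add: dist_real_def \<epsilon>_def)
  with \<open>u q = v q'\<close> show False by linarith
qed

text \<open>Two applications of the mean value theorem to the double difference
  g(x+h,y+h) - g(x+h,y) - g(x,y+h) + g(x,y), once in each order.\<close>

lemma mixed_partials_mean_value:
  assumes "total_diff g" "total_diff (dx g)" "total_diff (dy g)" and "h > 0"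
  shows "\<exists>q q'. dist q (x, y) < 2 * h \<and> dist q' (x, y) < 2 * h \<and> dy (dx g) q = dx (dy g) q'"
proof -
  have h: "x < x + h" "y < y + h" using \<open>h > 0\<close> by auto
  obtain \<xi> where \<xi>: "x < \<xi>" "\<xi> < x + h"
    "(g (x + h, y + h) - g (x + h, y)) - (g (x, y + h) - g (x, y))
       = h * (dx g (\<xi>, y + h) - dx g (\<xi>, y))"
    using MVT2[OF h(1), of "\<lambda>s. g (s, y + h) - g (s, y)" "\<lambda>s. dx g (s, y + h) - dx g (s, y)"]
      DERIV_diff[OF total_diff_partial_x total_diff_partial_x, OF assms(1) assms(1)] by auto
  obtain \<eta> where \<eta>: "y < \<eta>" "\<eta> < y + h" "dx g (\<xi>, y + h) - dx g (\<xi>, y) = h * dy (dx g) (\<xi>, \<eta>)"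
    using MVT2[OF h(2), of "\<lambda>t. dx g (\<xi>, t)" "\<lambda>t. dy (dx g) (\<xi>, t)"]
      total_diff_partial_y[OF assms(2)] by auto
  obtain \<eta>' where \<eta>': "y < \<eta>'" "\<eta>' < y + h"
    "(g (x + h, y + h) - g (x, y + h)) - (g (x + h, y) - g (x, y))
       = h * (dy g (x + h, \<eta>') - dy g (x, \<eta>'))"
    using MVT2[OF h(2), of "\<lambda>t. g (x + h, t) - g (x, t)" "\<lambda>t. dy g (x + h, t) - dy g (x, t)"]
      DERIV_diff[OF total_diff_partial_y total_diff_partial_y, OF assms(1) assms(1)] by auto
  obtain \<xi>' where \<xi>': "x < \<xi>'" "\<xi>' < x + h" "dy g (x + h, \<eta>') - dy g (x, \<eta>') = h * dx (dy g) (\<xi>', \<eta>')"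
    using MVT2[OF h(1), of "\<lambda>s. dy g (s, \<eta>')" "\<lambda>s. dx (dy g) (s, \<eta>')"]
      total_diff_partial_x[OF assms(3)] by auto
  have "h * h * dy (dx g) (\<xi>, \<eta>) = h * h * dx (dy g) (\<xi>', \<eta>')"
    using \<xi>(3) \<eta>(3) \<eta>'(3) \<xi>'(3) by (simp add: algebra_simps)
  then have "dy (dx g) (\<xi>, \<eta>) = dx (dy g) (\<xi>', \<eta>')" using \<open>h > 0\<close> by simp
  moreover have "dist (s, t) (x, y) < 2 * h" if "x < s" "s < x + h" "y < t" "t < y + h" for s t
    using sqrt_sum_squares_le_sum_abs[of "s - x" "t - y"] that
    by (simp add: dist_Pair_Pair dist_real_def)
  ultimately show ?thesis using \<xi> \<eta> \<xi>' \<eta>' by blast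
qed

lemma smooth2_mixed_partials:
  assumes "smooth2 g"
  shows "dx (dy g) p = dy (dx g) p"
proof -
  have D: "total_diff g" "total_diff (dx g)" "total_diff (dy g)"
    "total_diff (dy (dx g))" "total_diff (dx (dy g))"
    using assms smooth2_D by metis+
  obtain x y where p: "p = (x, y)" by fastforce
  have "dy (dx g) p = dx (dy g) p"
  proof (rule eq_if_common_values_nearby[where u = "dy (dx g)" and v = "dx (dy g)"])
    fix h :: real assume "h > 0"
    then show "\<exists>q q'. dist q p < h \<and> dist q' p < h \<and> dy (dx g) q = dx (dy g) q'"
      using mixed_partials_mean_value[OF D(1-3), of "h / 2" x y] p by simp
  qed (use D(4,5) total_diff_isCont in auto)
  then show ?thesis ..
qed

lemma taylor_bound_x:
  assumes g: "smooth2 g" and n: "n > 0"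
    and M: "\<And>t. \<bar>t\<bar> \<le> \<bar>x\<bar> \<Longrightarrow> \<bar>(dx ^^ n) g (t, y)\<bar> \<le> M"
  shows "\<bar>g (x, y) - (\<Sum>m<n. (dx ^^ m) g (0, y) / fact m * x ^ m)\<bar> \<le> M * \<bar>x\<bar> ^ n / fact n"
proof (cases "x = 0")
  case True
  then show ?thesis using n by (cases n) (simp_all add: sum.lessThan_Suc_shift)
next
  case False
  have D: "\<forall>m t. m < n \<and> - \<bar>x\<bar> \<le> t \<and> t \<le> \<bar>x\<bar> \<longrightarrow>
      ((\<lambda>t. (dx ^^ m) g (t, y)) has_real_derivative (dx ^^ Suc m) g (t, y)) (at t)"
    using total_diff_partial_x[OF smooth2_D(1)[OF smooth2_dx_funpow[OF g]]] by simp
  have "\<exists>t. (if x < 0 then x < t \<and> t < 0 else 0 < t \<and> t < x) \<and>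
      g (x, y) = (\<Sum>m<n. (dx ^^ m) g (0, y) / fact m * (x - 0) ^ m) + (dx ^^ n) g (t, y) / fact n * (x - 0) ^ n"
    by (rule Taylor[of n "\<lambda>m t. (dx ^^ m) g (t, y)" "\<lambda>t. g (t, y)" "- \<bar>x\<bar>" "\<bar>x\<bar>", OF n _ D])
      (use False in auto)
  then obtain t where t: "if x < 0 then x < t \<and> t < 0 else 0 < t \<and> t < x"
    "g (x, y) = (\<Sum>m<n. (dx ^^ m) g (0, y) / fact m * (x - 0) ^ m) + (dx ^^ n) g (t, y) / fact n * (x - 0) ^ n"
    by blast
  have "\<bar>t\<bar> \<le> \<bar>x\<bar>" using t(1) by (auto split: if_splits)
  have "\<bar>(dx ^^ n) g (t, y)\<bar> * \<bar>x\<bar> ^ n / fact n \<le> M * \<bar>x\<bar> ^ n / fact n"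
    using M[OF \<open>\<bar>t\<bar> \<le> \<bar>x\<bar>\<close>] by (intro divide_right_mono mult_right_mono) auto
  then show ?thesis using t(2) by (simp add: abs_mult power_abs)
qed

lemma taylor_bound_y:
  assumes g: "smooth2 g" and n: "n > 0"
    and M: "\<And>t. \<bar>t\<bar> \<le> \<bar>y\<bar> \<Longrightarrow> \<bar>(dy ^^ n) g (x, t)\<bar> \<le> M"
  shows "\<bar>g (x, y) - (\<Sum>m<n. (dy ^^ m) g (x, 0) / fact m * y ^ m)\<bar> \<le> M * \<bar>y\<bar> ^ n / fact n"
proof (cases "y = 0")
  case True
  then show ?thesis using n by (cases n) (simp_all add: sum.lessThan_Suc_shift)
next
  case False
  have D: "\<forall>m t. m < n \<and> - \<bar>y\<bar> \<le> t \<and> t \<le> \<bar>y\<bar> \<longrightarrow>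
      ((\<lambda>t. (dy ^^ m) g (x, t)) has_real_derivative (dy ^^ Suc m) g (x, t)) (at t)"
    using total_diff_partial_y[OF smooth2_D(1)[OF smooth2_dy_funpow[OF g]]] by simp
  have "\<exists>t. (if y < 0 then y < t \<and> t < 0 else 0 < t \<and> t < y) \<and>
      g (x, y) = (\<Sum>m<n. (dy ^^ m) g (x, 0) / fact m * (y - 0) ^ m) + (dy ^^ n) g (x, t) / fact n * (y - 0) ^ n"
    by (rule Taylor[of n "\<lambda>m t. (dy ^^ m) g (x, t)" "\<lambda>t. g (x, t)" "- \<bar>y\<bar>" "\<bar>y\<bar>", OF n _ D])
      (use False in auto)
  then obtain t where t: "if y < 0 then y < t \<and> t < 0 else 0 < t \<and> t < y"
    "g (x, y) = (\<Sum>m<n. (dy ^^ m) g (x, 0) / fact m * (y - 0) ^ m) + (dy ^^ n) g (x, t) / fact n * (y - 0) ^ n"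
    by blast
  have "\<bar>t\<bar> \<le> \<bar>y\<bar>" using t(1) by (auto split: if_splits)
  have "\<bar>(dy ^^ n) g (x, t)\<bar> * \<bar>y\<bar> ^ n / fact n \<le> M * \<bar>y\<bar> ^ n / fact n"
    using M[OF \<open>\<bar>t\<bar> \<le> \<bar>y\<bar>\<close>] by (intro divide_right_mono mult_right_mono) auto
  then show ?thesis using t(2) by (simp add: abs_mult power_abs)
qed

lemma bounded_on_square:
  fixes G :: "(real \<times> real \<Rightarrow> real) set"
  assumes "finite G" "\<And>g. g \<in> G \<Longrightarrow> continuous_on ({-1..1} \<times> {-1..1}) g"
  shows "\<exists>M\<ge>0. \<forall>g\<in>G. \<forall>x y. \<bar>x\<bar> \<le> 1 \<longrightarrow> \<bar>y\<bar> \<le> 1 \<longrightarrow> \<bar>g (x, y)\<bar> \<le> M"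
proof -
  have "compact ({-1..1::real} \<times> {-1..1::real})" by (intro compact_Times compact_Icc)
  then have "compact (\<Union>g\<in>G. g ` ({-1..1} \<times> {-1..1}))"
    using assms by (intro compact_UN compact_continuous_image) auto
  then obtain M where "\<forall>z\<in>(\<Union>g\<in>G. g ` ({-1..1} \<times> {-1..1})). norm z \<le> M"
    using compact_imp_bounded bounded_iff by blast
  then have "\<forall>g\<in>G. \<forall>x y. \<bar>x\<bar> \<le> 1 \<longrightarrow> \<bar>y\<bar> \<le> 1 \<longrightarrow> \<bar>g (x, y)\<bar> \<le> max 0 M"
    by (force simp: abs_le_iff)
  then show ?thesis by (intro exI[of _ "max 0 M"]) simp
qed

lemma monomial_le_parabola:
  fixes X Y \<Lambda> c :: real
  assumes "0 \<le> X" "X \<le> 1" "0 \<le> Y" "Y \<le> \<Lambda> * X\<^sup>2" "1 \<le> \<Lambda>" "0 \<le> c" "i \<le> 2" "n \<le> 2 * i + j"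
  shows "c * (Y ^ i * X ^ j) \<le> c * \<Lambda>\<^sup>2 * X ^ n"
proof -
  have "Y ^ i * X ^ j \<le> (\<Lambda> * X\<^sup>2) ^ i * X ^ j"
    using assms by (intro mult_right_mono power_mono) auto
  also have "\<dots> = \<Lambda> ^ i * X ^ (2 * i + j)"
    by (simp add: power_mult_distrib power_mult power_add)
  also have "\<dots> \<le> \<Lambda>\<^sup>2 * X ^ n"
    using assms by (intro mult_mono power_increasing power_decreasing) auto
  finally show ?thesis using assms(6) by (simp add: mult_left_mono mult.assoc)
qed

lemma quadratic_defect_bound:
  fixes x y a P M A0 A1 A2 :: real
  assumes "\<bar>A0 + A1 * x + A2 / 2 * x\<^sup>2\<bar> \<le> M * \<bar>x\<bar> ^ 3 / 6"
    and "\<bar>A0 - a * y\<bar> \<le> M * y\<^sup>2 / 2" "\<bar>A1\<bar> \<le> M * \<bar>y\<bar>" "\<bar>A2 - P\<bar> \<le> M * \<bar>y\<bar>"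
  shows "\<bar>a * y + P / 2 * x\<^sup>2\<bar> \<le> M * \<bar>x\<bar> ^ 3 / 6 + M * y\<^sup>2 / 2 + M * \<bar>y\<bar> * \<bar>x\<bar> + M * \<bar>y\<bar> * x\<^sup>2 / 2"
proof -
  have triangle: "\<bar>p - q - r - s\<bar> \<le> \<bar>p\<bar> + \<bar>q\<bar> + \<bar>r\<bar> + \<bar>s\<bar>" for p q r s :: real
    by linarith
  have "a * y + P / 2 * x\<^sup>2 = (A0 + A1 * x + A2 / 2 * x\<^sup>2) - (A0 - a * y) - A1 * x - (A2 - P) / 2 * x\<^sup>2"
    by (simp add: field_simps)
  then have "\<bar>a * y + P / 2 * x\<^sup>2\<bar> \<le> \<bar>A0 + A1 * x + A2 / 2 * x\<^sup>2\<bar> + \<bar>A0 - a * y\<bar> + \<bar>A1 * x\<bar> + \<bar>(A2 - P) / 2 * x\<^sup>2\<bar>"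
    using triangle by metis
  moreover have "\<bar>A1 * x\<bar> \<le> M * \<bar>y\<bar> * \<bar>x\<bar>"
    using assms(3) by (simp add: abs_mult mult_right_mono)
  moreover have "\<bar>(A2 - P) / 2 * x\<^sup>2\<bar> \<le> M * \<bar>y\<bar> * x\<^sup>2 / 2"
    using mult_right_mono[OF assms(4) zero_le_power2[of x]] by (simp add: abs_mult)
  ultimately show ?thesis using assms(1,2) by linarith
qed

lemma zero_set_parabola_bound:
  fixes x y r a P M :: real
  assumes "\<bar>x\<bar> \<le> r" "\<bar>y\<bar> \<le> r" "r \<le> 1" "0 \<le> M" "4 * M * r \<le> \<bar>a\<bar>" "a \<noteq> 0"
    and defect: "\<bar>a * y + P / 2 * x\<^sup>2\<bar> \<le> M * \<bar>x\<bar> ^ 3 / 6 + M * y\<^sup>2 / 2 + M * \<bar>y\<bar> * \<bar>x\<bar> + M * \<bar>y\<bar> * x\<^sup>2 / 2"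
  shows "\<bar>y\<bar> \<le> (\<bar>P\<bar> + M) / \<bar>a\<bar> * x\<^sup>2"
proof -
  have "\<bar>x\<bar> ^ 3 \<le> x\<^sup>2" "x\<^sup>2 \<le> r"
    using assms(1,3) power_decreasing[of 2 3 "\<bar>x\<bar>"] power_decreasing[of 1 2 "\<bar>x\<bar>"]
    by (auto simp: power2_abs)
  then have "M * \<bar>x\<bar> ^ 3 \<le> M * x\<^sup>2" "M * \<bar>y\<bar> * \<bar>y\<bar> \<le> M * \<bar>y\<bar> * r"
    "M * \<bar>y\<bar> * \<bar>x\<bar> \<le> M * \<bar>y\<bar> * r" "M * \<bar>y\<bar> * x\<^sup>2 \<le> M * \<bar>y\<bar> * r"
    using assms(1,2,4) by (auto intro: mult_left_mono)
  moreover have "M * y\<^sup>2 = M * \<bar>y\<bar> * \<bar>y\<bar>" by (simp add: power2_eq_square abs_mult_self_eq)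
  moreover have "\<bar>a\<bar> * \<bar>y\<bar> \<le> \<bar>a * y + P / 2 * x\<^sup>2\<bar> + \<bar>P\<bar> / 2 * x\<^sup>2"
    using abs_triangle_ineq4[of "a * y + P / 2 * x\<^sup>2" "P / 2 * x\<^sup>2"] by (simp add: abs_mult)
  moreover have "4 * (M * \<bar>y\<bar> * r) \<le> \<bar>a\<bar> * \<bar>y\<bar>"
    using mult_right_mono[OF assms(5) abs_ge_zero[of y]] by (simp add: ac_simps)
  moreover have "0 \<le> M * x\<^sup>2" using assms(4) by simp
  ultimately have "\<bar>a\<bar> * \<bar>y\<bar> \<le> (\<bar>P\<bar> + M) * x\<^sup>2"
    using defect unfolding distrib_right by linarith
  then show ?thesis
    using assms(6) by (simp add: field_simps)
qed

lemma quadratic_defect_cubic_bound: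
  fixes x y a P M \<Lambda> :: real
  assumes "\<bar>x\<bar> \<le> 1" "0 \<le> M" "1 \<le> \<Lambda>" "\<bar>y\<bar> \<le> \<Lambda> * x\<^sup>2"
    and defect: "\<bar>a * y + P / 2 * x\<^sup>2\<bar> \<le> M * \<bar>x\<bar> ^ 3 / 6 + M * y\<^sup>2 / 2 + M * \<bar>y\<bar> * \<bar>x\<bar> + M * \<bar>y\<bar> * x\<^sup>2 / 2"
  shows "\<bar>a * y + P / 2 * x\<^sup>2\<bar> \<le> 3 * M * \<Lambda>\<^sup>2 * \<bar>x\<bar> ^ 3"
proof -
  note mono = monomial_le_parabola[of "\<bar>x\<bar>" "\<bar>y\<bar>" \<Lambda> M]
  have "M * \<bar>x\<bar> ^ 3 \<le> M * \<Lambda>\<^sup>2 * \<bar>x\<bar> ^ 3" "M * y\<^sup>2 \<le> M * \<Lambda>\<^sup>2 * \<bar>x\<bar> ^ 3"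
    "M * \<bar>y\<bar> * \<bar>x\<bar> \<le> M * \<Lambda>\<^sup>2 * \<bar>x\<bar> ^ 3" "M * \<bar>y\<bar> * x\<^sup>2 \<le> M * \<Lambda>\<^sup>2 * \<bar>x\<bar> ^ 3"
    using mono[of 0 3 3] mono[of 2 3 0] mono[of 1 3 1] mono[of 1 3 2] assms(1-4)
    by (simp_all add: power2_abs mult.assoc)
  moreover have "0 \<le> M * \<Lambda>\<^sup>2 * \<bar>x\<bar> ^ 3" using assms(2) by simp
  ultimately show ?thesis using defect by linarith
qed

lemma cubic_defect_quartic_bound:
  fixes F B0 B1 B2 B3 x y a P B D M N \<Lambda> :: real
  assumes "\<bar>x\<bar> \<le> 1" "0 \<le> M" "1 \<le> \<Lambda>" "a \<noteq> 0"
    and parabola: "\<bar>y\<bar> \<le> \<Lambda> * x\<^sup>2" and defect: "\<bar>a * y + P / 2 * x\<^sup>2\<bar> \<le> N * \<bar>x\<bar> ^ 3"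
    and taylor: "\<bar>F - (B0 + B1 * x + B2 / 2 * x\<^sup>2 + B3 / 6 * x ^ 3)\<bar> \<le> M * x ^ 4 / 24"
    and "\<bar>B0\<bar> \<le> M * y\<^sup>2 / 2" "\<bar>B1 - B * y\<bar> \<le> M * y\<^sup>2 / 2" "\<bar>B2\<bar> \<le> M * \<bar>y\<bar>" "\<bar>B3 - D\<bar> \<le> M * \<bar>y\<bar>"
  shows "\<bar>F - (D / 6 - B * P / (2 * a)) * x ^ 3\<bar> \<le> (2 * M * \<Lambda>\<^sup>2 + \<bar>B / a\<bar> * N) * x ^ 4"
proof -
  note mono = monomial_le_parabola[of "\<bar>x\<bar>" "\<bar>y\<bar>" \<Lambda> M]
  have triangle: "\<bar>p + q + r + s + t + u\<bar> \<le> \<bar>p\<bar> + \<bar>q\<bar> + \<bar>r\<bar> + \<bar>s\<bar> + \<bar>t\<bar> + \<bar>u\<bar>" for p q r s t u :: real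
    by linarith
  have "F - (D / 6 - B * P / (2 * a)) * x ^ 3 = (F - (B0 + B1 * x + B2 / 2 * x\<^sup>2 + B3 / 6 * x ^ 3))
      + B0 + (B1 - B * y) * x + B2 / 2 * x\<^sup>2 + (B3 - D) / 6 * x ^ 3 + B / a * x * (a * y + P / 2 * x\<^sup>2)"
    using assms(4) by (simp add: field_simps power2_eq_square power3_eq_cube)
  then have "\<bar>F - (D / 6 - B * P / (2 * a)) * x ^ 3\<bar> \<le> \<bar>F - (B0 + B1 * x + B2 / 2 * x\<^sup>2 + B3 / 6 * x ^ 3)\<bar>
      + \<bar>B0\<bar> + \<bar>(B1 - B * y) * x\<bar> + \<bar>B2 / 2 * x\<^sup>2\<bar> + \<bar>(B3 - D) / 6 * x ^ 3\<bar> + \<bar>B / a * x * (a * y + P / 2 * x\<^sup>2)\<bar>"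
    using triangle by metis
  moreover have "M * x ^ 4 \<le> M * \<Lambda>\<^sup>2 * x ^ 4"
    using mono[of 0 4 4] assms(1-5) by (simp add: power_even_abs)
  moreover have "M * y\<^sup>2 \<le> M * \<Lambda>\<^sup>2 * x ^ 4"
    using mono[of 2 4 0] assms(1-5) by (simp add: power_even_abs)
  moreover have "\<bar>(B1 - B * y) * x\<bar> \<le> M * \<Lambda>\<^sup>2 * x ^ 4 / 2"
    using mult_right_mono[OF assms(9) abs_ge_zero[of x]] mono[of 2 4 1] assms(1-5)
    by (simp add: abs_mult power_even_abs power2_abs)
  moreover have "\<bar>B2 / 2 * x\<^sup>2\<bar> \<le> M * \<Lambda>\<^sup>2 * x ^ 4 / 2"
    using mult_right_mono[OF assms(10) zero_le_power2[of x]] mono[of 1 4 2] assms(1-5)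
    by (simp add: abs_mult power_even_abs power2_abs mult.assoc)
  moreover have "\<bar>(B3 - D) / 6 * x ^ 3\<bar> \<le> M * \<Lambda>\<^sup>2 * x ^ 4 / 6"
    using mult_right_mono[OF assms(11) zero_le_power[OF abs_ge_zero[of x], of 3]] mono[of 1 4 3] assms(1-5)
    by (simp add: abs_mult power_abs power_even_abs power2_abs mult.assoc)
  moreover have "\<bar>B / a * x * (a * y + P / 2 * x\<^sup>2)\<bar> \<le> \<bar>B / a\<bar> * N * x ^ 4"
  proof -
    have "\<bar>B / a * x * (a * y + P / 2 * x\<^sup>2)\<bar> \<le> \<bar>B / a\<bar> * \<bar>x\<bar> * (N * \<bar>x\<bar> ^ 3)"
      unfolding abs_mult by (intro mult_left_mono defect) auto
    also have "\<dots> = \<bar>B / a\<bar> * N * x ^ 4"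
      by (simp add: power_even_abs flip: power_Suc)
    finally show ?thesis .
  qed
  moreover have "0 \<le> M * \<Lambda>\<^sup>2 * x ^ 4" using assms(2) by simp
  ultimately show ?thesis
    using taylor assms(8) unfolding distrib_right by linarith
qed

text \<open>The coefficient of x^3 in f2 restricted to the zero set of f1, which is
  y = -f1_xx x^2 / (2 f1_y) + O(x^3).\<close>

definition cusp_cubic_coeff :: "(real \<times> real \<Rightarrow> real) \<Rightarrow> (real \<times> real \<Rightarrow> real) \<Rightarrow> real" where
  "cusp_cubic_coeff f1 f2 = dx (dx (dx f2)) (0, 0) / 6
     - dy (dx f2) (0, 0) * dx (dx f1) (0, 0) / (2 * dy f1 (0, 0))"

definition cusp_taylor_estimates ::
    "(real \<times> real \<Rightarrow> real) \<Rightarrow> (real \<times> real \<Rightarrow> real) \<Rightarrow> real \<Rightarrow> real \<Rightarrow> real \<Rightarrow> bool" where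
  "cusp_taylor_estimates f1 f2 M x y \<longleftrightarrow>
    \<bar>f1 (0, y) + dx f1 (0, y) * x + dx (dx f1) (0, y) / 2 * x\<^sup>2 - f1 (x, y)\<bar> \<le> M * \<bar>x\<bar> ^ 3 / 6 \<and>
    \<bar>f1 (0, y) - dy f1 (0, 0) * y\<bar> \<le> M * y\<^sup>2 / 2 \<and>
    \<bar>dx f1 (0, y)\<bar> \<le> M * \<bar>y\<bar> \<and>
    \<bar>dx (dx f1) (0, y) - dx (dx f1) (0, 0)\<bar> \<le> M * \<bar>y\<bar> \<and>
    \<bar>f2 (x, y) - (f2 (0, y) + dx f2 (0, y) * x + dx (dx f2) (0, y) / 2 * x\<^sup>2
        + dx (dx (dx f2)) (0, y) / 6 * x ^ 3)\<bar> \<le> M * x ^ 4 / 24 \<and>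
    \<bar>f2 (0, y)\<bar> \<le> M * y\<^sup>2 / 2 \<and>
    \<bar>dx f2 (0, y) - dy (dx f2) (0, 0) * y\<bar> \<le> M * y\<^sup>2 / 2 \<and>
    \<bar>dx (dx f2) (0, y)\<bar> \<le> M * \<bar>y\<bar> \<and>
    \<bar>dx (dx (dx f2)) (0, y) - dx (dx (dx f2)) (0, 0)\<bar> \<le> M * \<bar>y\<bar>"

lemma cusp_taylor_bounds:
  assumes "smooth2 f1" "smooth2 f2" and "f1 (0, 0) = 0" "f2 (0, 0) = 0"
    and "dx f1 (0, 0) = 0" "dx f2 (0, 0) = 0" "dy f2 (0, 0) = 0" "dx (dx f2) (0, 0) = 0"
  shows "\<exists>M\<ge>0. \<forall>x y. \<bar>x\<bar> \<le> 1 \<longrightarrow> \<bar>y\<bar> \<le> 1 \<longrightarrow> cusp_taylor_estimates f1 f2 M x y"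
proof -
  define G where "G = {(dx ^^ 3) f1, (dx ^^ 4) f2, (dy ^^ 2) f1, (dy ^^ 2) f2, (dy ^^ 2) (dx f2),
    dy (dx f1), dy (dx (dx f1)), dy (dx (dx f2)), dy (dx (dx (dx f2)))}"
  have smooth: "smooth2 (dx f1)" "smooth2 (dx (dx f1))" "smooth2 (dx f2)" "smooth2 (dx (dx f2))"
    "smooth2 (dx (dx (dx f2)))"
    using assms(1,2) smooth2_D(2) by blast+
  have "\<forall>g\<in>G. smooth2 g"
    unfolding G_def using assms(1,2) smooth smooth2_D(3) smooth2_dx_funpow smooth2_dy_funpow by auto
  then obtain M where "M \<ge> 0" and M: "\<And>g x y. g \<in> G \<Longrightarrow> \<bar>x\<bar> \<le> 1 \<Longrightarrow> \<bar>y\<bar> \<le> 1 \<Longrightarrow> \<bar>g (x, y)\<bar> \<le> M"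
    using bounded_on_square[of G] by (force simp: G_def intro: total_diff_continuous_on smooth2_D(1))
  have Tx: "\<bar>g (x, y) - (\<Sum>m<n. (dx ^^ m) g (0, y) / fact m * x ^ m)\<bar> \<le> M * \<bar>x\<bar> ^ n / fact n"
    if "smooth2 g" "(dx ^^ n) g \<in> G" "0 < n" "\<bar>x\<bar> \<le> 1" "\<bar>y\<bar> \<le> 1" for g n x y
    by (rule taylor_bound_x[OF that(1,3)]) (use M that in auto)
  have Ty: "\<bar>g (0, y) - (\<Sum>m<n. (dy ^^ m) g (0, 0) / fact m * y ^ m)\<bar> \<le> M * \<bar>y\<bar> ^ n / fact n"
    if "smooth2 g" "(dy ^^ n) g \<in> G" "0 < n" "\<bar>y\<bar> \<le> 1" for g n y
    by (rule taylor_bound_y[OF that(1,3)]) (use M that in auto)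
  show ?thesis
  proof (intro exI[of _ M] conjI allI impI \<open>M \<ge> 0\<close>, unfold cusp_taylor_estimates_def, intro conjI)
    fix x y :: real assume xy: "\<bar>x\<bar> \<le> 1" "\<bar>y\<bar> \<le> 1"
    show "\<bar>f1 (0, y) + dx f1 (0, y) * x + dx (dx f1) (0, y) / 2 * x\<^sup>2 - f1 (x, y)\<bar> \<le> M * \<bar>x\<bar> ^ 3 / 6"
      using Tx[of f1 3 x y] xy assms(1) by (simp add: G_def eval_nat_numeral abs_minus_commute)
    show "\<bar>f1 (0, y) - dy f1 (0, 0) * y\<bar> \<le> M * y\<^sup>2 / 2"
      using Ty[of f1 2 y] xy assms by (simp add: G_def eval_nat_numeral)
    show "\<bar>dx f1 (0, y)\<bar> \<le> M * \<bar>y\<bar>"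
      using Ty[of "dx f1" 1 y] xy assms smooth by (simp add: G_def)
    show "\<bar>dx (dx f1) (0, y) - dx (dx f1) (0, 0)\<bar> \<le> M * \<bar>y\<bar>"
      using Ty[of "dx (dx f1)" 1 y] xy smooth by (simp add: G_def)
    show "\<bar>f2 (x, y) - (f2 (0, y) + dx f2 (0, y) * x + dx (dx f2) (0, y) / 2 * x\<^sup>2
        + dx (dx (dx f2)) (0, y) / 6 * x ^ 3)\<bar> \<le> M * x ^ 4 / 24"
      using Tx[of f2 4 x y] xy assms(2) by (simp add: G_def eval_nat_numeral power_even_abs)
    show "\<bar>f2 (0, y)\<bar> \<le> M * y\<^sup>2 / 2"
      using Ty[of f2 2 y] xy assms by (simp add: G_def eval_nat_numeral)
    show "\<bar>dx f2 (0, y) - dy (dx f2) (0, 0) * y\<bar> \<le> M * y\<^sup>2 / 2"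
      using Ty[of "dx f2" 2 y] xy assms smooth by (simp add: G_def eval_nat_numeral)
    show "\<bar>dx (dx f2) (0, y)\<bar> \<le> M * \<bar>y\<bar>"
      using Ty[of "dx (dx f2)" 1 y] xy assms smooth by (simp add: G_def)
    show "\<bar>dx (dx (dx f2)) (0, y) - dx (dx (dx f2)) (0, 0)\<bar> \<le> M * \<bar>y\<bar>"
      using Ty[of "dx (dx (dx f2))" 1 y] xy smooth by (simp add: G_def)
  qed
qed

lemma zero_set_cubic_bound:
  assumes "smooth2 f1" "smooth2 f2" and "f1 (0, 0) = 0" "f2 (0, 0) = 0"
    and "dx f1 (0, 0) = 0" "dx f2 (0, 0) = 0" "dy f2 (0, 0) = 0" "dx (dx f2) (0, 0) = 0"
    and "dy f1 (0, 0) \<noteq> 0"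
  shows "\<exists>C r. r > 0 \<and> (\<forall>x y. \<bar>x\<bar> \<le> r \<longrightarrow> \<bar>y\<bar> \<le> r \<longrightarrow> f1 (x, y) = 0 \<longrightarrow>
           \<bar>f2 (x, y) - cusp_cubic_coeff f1 f2 * x ^ 3\<bar> \<le> C * x ^ 4)"
proof -
  obtain M where "M \<ge> 0"
    and M: "\<And>x y. \<bar>x\<bar> \<le> 1 \<Longrightarrow> \<bar>y\<bar> \<le> 1 \<Longrightarrow> cusp_taylor_estimates f1 f2 M x y"
    using cusp_taylor_bounds[OF assms(1-8)] by blast
  define a P B where "a = dy f1 (0, 0)" and "P = dx (dx f1) (0, 0)" and "B = dy (dx f2) (0, 0)"
  define \<Lambda> where "\<Lambda> = 1 + (\<bar>P\<bar> + M) / \<bar>a\<bar>"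
  define r where "r = min 1 (\<bar>a\<bar> / (4 * M + 1))"
  have "a \<noteq> 0" using assms(9) by (simp add: a_def)
  have "1 \<le> \<Lambda>" using \<open>M \<ge> 0\<close> by (simp add: \<Lambda>_def)
  have "r > 0" "r \<le> 1" using \<open>a \<noteq> 0\<close> \<open>M \<ge> 0\<close> by (auto simp: r_def)
  have "4 * M * r \<le> \<bar>a\<bar>"
  proof -
    have "4 * M * r \<le> 4 * M * (\<bar>a\<bar> / (4 * M + 1))"
      using \<open>M \<ge> 0\<close> by (intro mult_left_mono) (auto simp: r_def)
    also have "\<dots> \<le> \<bar>a\<bar>" using \<open>M \<ge> 0\<close> by (simp add: field_simps)
    finally show ?thesis .
  qed
  have "\<bar>f2 (x, y) - cusp_cubic_coeff f1 f2 * x ^ 3\<bar> \<le> (2 * M * \<Lambda>\<^sup>2 + \<bar>B / a\<bar> * (3 * M * \<Lambda>\<^sup>2)) * x ^ 4"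
    if xy: "\<bar>x\<bar> \<le> r" "\<bar>y\<bar> \<le> r" and "f1 (x, y) = 0" for x y
  proof -
    have "\<bar>x\<bar> \<le> 1" "\<bar>y\<bar> \<le> 1" using xy \<open>r \<le> 1\<close> by auto
    note T = M[OF this, unfolded cusp_taylor_estimates_def] assms(3-8)
    have defect: "\<bar>a * y + P / 2 * x\<^sup>2\<bar> \<le> M * \<bar>x\<bar> ^ 3 / 6 + M * y\<^sup>2 / 2 + M * \<bar>y\<bar> * \<bar>x\<bar> + M * \<bar>y\<bar> * x\<^sup>2 / 2"
      by (rule quadratic_defect_bound) (use T \<open>f1 (x, y) = 0\<close> in \<open>auto simp: a_def P_def\<close>)
    have "\<bar>y\<bar> \<le> (\<bar>P\<bar> + M) / \<bar>a\<bar> * x\<^sup>2"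
      by (rule zero_set_parabola_bound[OF xy \<open>r \<le> 1\<close> \<open>M \<ge> 0\<close> \<open>4 * M * r \<le> \<bar>a\<bar>\<close> \<open>a \<noteq> 0\<close> defect])
    also have "\<dots> \<le> \<Lambda> * x\<^sup>2" by (intro mult_right_mono) (auto simp: \<Lambda>_def)
    finally have parabola: "\<bar>y\<bar> \<le> \<Lambda> * x\<^sup>2" .
    show ?thesis
      unfolding cusp_cubic_coeff_def a_def[symmetric] P_def[symmetric] B_def[symmetric]
    proof (rule cubic_defect_quartic_bound[OF \<open>\<bar>x\<bar> \<le> 1\<close> \<open>M \<ge> 0\<close> \<open>1 \<le> \<Lambda>\<close> \<open>a \<noteq> 0\<close> parabola])
      show "\<bar>a * y + P / 2 * x\<^sup>2\<bar> \<le> 3 * M * \<Lambda>\<^sup>2 * \<bar>x\<bar> ^ 3"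
        by (rule quadratic_defect_cubic_bound[OF \<open>\<bar>x\<bar> \<le> 1\<close> \<open>M \<ge> 0\<close> \<open>1 \<le> \<Lambda>\<close> parabola defect])
    qed (use T in \<open>auto simp: B_def\<close>)
  qed
  then show ?thesis using \<open>r > 0\<close> by blast
qed

lemma sign_near_simple_zero:
  fixes g :: "real \<Rightarrow> real"
  assumes "(g has_real_derivative a) (at 0)" "g 0 = 0" "a \<noteq> 0"
  shows "\<exists>r>0. \<forall>y. \<bar>y\<bar> \<le> r \<longrightarrow> y \<noteq> 0 \<longrightarrow> a * y * g y > 0"
proof -
  have "((\<lambda>h. g h / h) \<longlongrightarrow> a) (at 0)"
    using assms(1,2) unfolding DERIV_def by simp
  then have "((\<lambda>h. a * (g h / h)) \<longlongrightarrow> a * a) (at 0)"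
    by (rule tendsto_mult_left)
  moreover have "a * a > 0" using assms(3) not_real_square_gt_zero by blast
  ultimately have "\<forall>\<^sub>F h in at 0. a * (g h / h) > 0" by (rule order_tendstoD)
  then obtain d where "d > 0" and d: "\<And>y. y \<noteq> 0 \<Longrightarrow> \<bar>y\<bar> < d \<Longrightarrow> a * (g y / y) > 0"
    unfolding eventually_at by (auto simp: dist_real_def)
  have "a * y * g y > 0" if "\<bar>y\<bar> \<le> d / 2" "y \<noteq> 0" for y
  proof -
    have "a * (g y / y) > 0" using d[OF that(2)] that \<open>d > 0\<close> by simp
    moreover have "y\<^sup>2 > 0" using that(2) by simp
    moreover have "a * y * g y = y\<^sup>2 * (a * (g y / y))" using that(2) by (simp add: field_simps power2_eq_square)
    ultimately show ?thesis by (metis mult_pos_pos)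
  qed
  then show ?thesis using \<open>d > 0\<close> by (intro exI[of _ "d / 2"]) auto
qed

definition circle_image :: "(real \<times> real \<Rightarrow> real) \<Rightarrow> (real \<times> real \<Rightarrow> real) \<Rightarrow> real \<Rightarrow> real \<Rightarrow> complex" where
  "circle_image g1 g2 r = (\<lambda>s. let z = circlepath 0 r s in Complex (g1 (Re z, Im z)) (g2 (Re z, Im z)))"

lemma local_degree_eqI:
  assumes "r0 > 0" and "\<And>r. 0 < r \<Longrightarrow> r < r0 \<Longrightarrow> winding_number (circle_image f1 f2 r) 0 = of_int d"
  shows "local_degree f1 f2 = d"
  unfolding local_degree_def circle_image_def[symmetric]
proof (rule the_equality)
  show "\<exists>e>0. \<forall>r\<in>{0<..<e}. winding_number (circle_image f1 f2 r) 0 = of_int d"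
    using assms by auto
next
  fix d' assume "\<exists>e>0. \<forall>r\<in>{0<..<e}. winding_number (circle_image f1 f2 r) 0 = of_int d'"
  then obtain e where "e > 0" and e: "\<And>r. 0 < r \<Longrightarrow> r < e \<Longrightarrow> winding_number (circle_image f1 f2 r) 0 = of_int d'"
    by auto
  define r where "r = min e r0 / 2"
  have "0 < r" "r < e" "r < r0" using \<open>e > 0\<close> assms(1) by (auto simp: r_def)
  then have "(of_int d' :: complex) = of_int d" using e assms(2) by metis
  then show "d' = d" by simp
qed

lemma circle_image_loop:
  assumes "continuous_on UNIV g1" "continuous_on UNIV g2"
  shows "path (circle_image g1 g2 r)" "pathfinish (circle_image g1 g2 r) = pathstart (circle_image g1 g2 r)"
proof -
  have "continuous_on {0..1} (\<lambda>s. (Re (circlepath 0 r s), Im (circlepath 0 r s)))"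
    using path_circlepath unfolding path_def by (intro continuous_intros)
  then have "continuous_on {0..1} (\<lambda>s. g1 (Re (circlepath 0 r s), Im (circlepath 0 r s)))"
            "continuous_on {0..1} (\<lambda>s. g2 (Re (circlepath 0 r s), Im (circlepath 0 r s)))"
    using continuous_on_compose2[OF assms(1)] continuous_on_compose2[OF assms(2)] by auto
  then show "path (circle_image g1 g2 r)"
    unfolding path_def circle_image_def Let_def Complex_eq by (intro continuous_intros)
  have "circlepath 0 r 1 = circlepath 0 r 0"
    using pathfinish_circlepath pathstart_circlepath unfolding pathfinish_def pathstart_def by metis
  then show "pathfinish (circle_image g1 g2 r) = pathstart (circle_image g1 g2 r)"
    by (simp add: pathfinish_def pathstart_def circle_image_def)
qed

lemma circlepath_on_circle: "(Re (circlepath 0 r s))\<^sup>2 + (Im (circlepath 0 r s))\<^sup>2 = r\<^sup>2"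
proof -
  have "cmod (circlepath 0 r s) = \<bar>r\<bar>" by (simp add: circlepath norm_mult)
  then show ?thesis using cmod_power2[of "circlepath 0 r s"] by simp
qed

lemma winding_number_circle_image_eq:
  assumes "continuous_on UNIV g1" "continuous_on UNIV g2" "continuous_on UNIV h1" "continuous_on UNIV h2"
    and avoid: "\<And>x y u. x\<^sup>2 + y\<^sup>2 = r\<^sup>2 \<Longrightarrow> 0 \<le> u \<Longrightarrow> u \<le> 1 \<Longrightarrow>
      (1 - u) * g1 (x, y) + u * h1 (x, y) \<noteq> 0 \<or> (1 - u) * g2 (x, y) + u * h2 (x, y) \<noteq> 0"
  shows "winding_number (circle_image g1 g2 r) 0 = winding_number (circle_image h1 h2 r) 0"
proof (rule sym, rule winding_number_loops_linear_eq)
  show "path (circle_image g1 g2 r)" "path (circle_image h1 h2 r)"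
    "pathfinish (circle_image g1 g2 r) = pathstart (circle_image g1 g2 r)"
    "pathfinish (circle_image h1 h2 r) = pathstart (circle_image h1 h2 r)"
    using circle_image_loop assms(1-4) by blast+
next
  fix s
  show "0 \<notin> closed_segment (circle_image g1 g2 r s) (circle_image h1 h2 r s)"
  proof
    assume "0 \<in> closed_segment (circle_image g1 g2 r s) (circle_image h1 h2 r s)"
    then obtain u where "0 \<le> u" "u \<le> 1"
      "(1 - u) *\<^sub>R circle_image g1 g2 r s + u *\<^sub>R circle_image h1 h2 r s = 0"
      unfolding closed_segment_def by auto
    with avoid[OF circlepath_on_circle] show False
      by (auto simp: circle_image_def complex_eq_iff Let_def)
  qed
qed

lemma winding_number_circle_image_id: "0 < r \<Longrightarrow> winding_number (circle_image fst snd r) 0 = 1"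
  by (simp add: circle_image_def winding_number_circlepath_centre)

lemma winding_number_circle_image_reflect:
  assumes "0 < r"
  shows "winding_number (circle_image fst (\<lambda>p. - snd p) r) 0 = -1"
proof -
  have "circle_image fst (\<lambda>p. - snd p) r = cnj \<circ> circlepath 0 r"
    by (auto simp: circle_image_def complex_eq_iff Let_def)
  moreover have "0 \<notin> path_image (circlepath 0 r)" using assms by simp
  ultimately show ?thesis
    using winding_number_cnj[of "circlepath 0 r" 0] winding_number_circlepath_centre[OF assms] by simp
qed

lemma swap_homotopy_nonzero:
  fixes a d \<sigma> x y u :: real
  assumes "\<sigma> * (a * d) < 0" "(x, y) \<noteq> (0, 0)" "0 \<le> u" "u \<le> 1"
  shows "(1 - u) * (a * y) + u * x \<noteq> 0 \<or> (1 - u) * (d * x) + u * (\<sigma> * y) \<noteq> 0"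
proof (rule ccontr)
  assume "\<not> ?thesis"
  then have eq: "(1 - u) * (a * y) + u * x = 0" "(1 - u) * (d * x) + u * (\<sigma> * y) = 0" by auto
  have "\<sigma> * ((1 - u)\<^sup>2 * (a * d) - \<sigma> * u\<^sup>2) * y
      = \<sigma> * (((1 - u) * (a * y) + u * x) * ((1 - u) * d) - ((1 - u) * (d * x) + u * (\<sigma> * y)) * u)"
    by (simp add: algebra_simps power2_eq_square)
  then have "\<sigma> * ((1 - u)\<^sup>2 * (a * d) - \<sigma> * u\<^sup>2) * y = 0" using eq by simp
  moreover have "\<sigma> * ((1 - u)\<^sup>2 * (a * d) - \<sigma> * u\<^sup>2) < 0"
  proof (cases "u = 1")
    case True
    have "\<sigma> \<noteq> 0" using assms(1) by auto
    then have "\<sigma> * \<sigma> > 0" using not_real_square_gt_zero by blast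
    then show ?thesis using True by (simp add: power2_eq_square)
  next
    case False
    then have "(1 - u)\<^sup>2 * (\<sigma> * (a * d)) < 0" using assms(1) by (simp add: mult_pos_neg)
    moreover have "\<sigma> * \<sigma> * u\<^sup>2 \<ge> 0" by simp
    moreover have "\<sigma> * ((1 - u)\<^sup>2 * (a * d) - \<sigma> * u\<^sup>2) = (1 - u)\<^sup>2 * (\<sigma> * (a * d)) - \<sigma> * \<sigma> * u\<^sup>2"
      by (simp add: algebra_simps)
    ultimately show ?thesis by linarith
  qed
  ultimately have "y = 0" by (metis less_irrefl mult_eq_0_iff)
  with assms(2) have "x \<noteq> 0" by simp
  with eq \<open>y = 0\<close> have "u = 0" "(1 - u) * d = 0" by auto
  with assms(1) show False by simp
qed

lemma winding_number_circle_image_swap: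
  assumes "0 < r" "a * d \<noteq> 0"
  shows "winding_number (circle_image (\<lambda>p. a * snd p) (\<lambda>p. d * fst p) r) 0 = (if a * d > 0 then -1 else 1)"
proof -
  define \<sigma> :: real where "\<sigma> = (if a * d > 0 then -1 else 1)"
  have "a * d < 0 \<or> a * d > 0" using assms(2) by linarith
  then have "\<sigma> * (a * d) < 0" by (auto simp: \<sigma>_def)
  have "winding_number (circle_image (\<lambda>p. a * snd p) (\<lambda>p. d * fst p) r) 0
      = winding_number (circle_image fst (\<lambda>p. \<sigma> * snd p) r) 0"
  proof (rule winding_number_circle_image_eq)
    fix x y u :: real assume "x\<^sup>2 + y\<^sup>2 = r\<^sup>2" "0 \<le> u" "u \<le> 1"
    moreover have "(x, y) \<noteq> (0, 0)" using \<open>x\<^sup>2 + y\<^sup>2 = r\<^sup>2\<close> assms(1) by auto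
    ultimately show "(1 - u) * (a * snd (x, y)) + u * fst (x, y) \<noteq> 0
        \<or> (1 - u) * (d * fst (x, y)) + u * (\<sigma> * snd (x, y)) \<noteq> 0"
      using swap_homotopy_nonzero[OF \<open>\<sigma> * (a * d) < 0\<close>] by simp
  qed (intro continuous_intros)+
  also have "\<dots> = (if a * d > 0 then -1 else 1)"
    using winding_number_circle_image_reflect[OF assms(1)] winding_number_circle_image_id[OF assms(1)]
    by (simp add: \<sigma>_def)
  finally show ?thesis .
qed

lemma cubic_homotopy_nonzero:
  fixes F1 F2 x d u :: real
  assumes "d \<noteq> 0" and est: "F1 = 0 \<Longrightarrow> \<bar>F2 - d * x ^ 3\<bar> \<le> \<bar>d\<bar> / 2 * \<bar>x\<bar> ^ 3"
    and axis: "F1 = 0 \<Longrightarrow> x \<noteq> 0" and "0 \<le> u" "u \<le> 1"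
  shows "F1 \<noteq> 0 \<or> (1 - u) * F2 + u * (d * x ^ 3) \<noteq> 0"
proof (rule ccontr)
  assume "\<not> ?thesis"
  then have "F1 = 0" and eq: "d * x ^ 3 = (1 - u) * (d * x ^ 3 - F2)" by (auto simp: algebra_simps)
  have "\<bar>d\<bar> * \<bar>x\<bar> ^ 3 = \<bar>d * x ^ 3\<bar>" by (simp add: abs_mult power_abs)
  also have "\<dots> = (1 - u) * \<bar>F2 - d * x ^ 3\<bar>"
    using assms(5) by (subst eq) (simp add: abs_mult abs_minus_commute)
  also have "\<dots> \<le> \<bar>F2 - d * x ^ 3\<bar>" using assms(4,5) by (simp add: mult_left_le_one_le)
  also have "\<dots> \<le> \<bar>d\<bar> / 2 * \<bar>x\<bar> ^ 3" using est \<open>F1 = 0\<close> .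
  finally have "\<bar>x\<bar> ^ 3 \<le> 0" using assms(1) by (simp add: field_simps)
  then have "\<bar>x\<bar> ^ 3 = 0" using zero_le_power[of "\<bar>x\<bar>" 3] by linarith
  then have "x = 0" by simp
  with axis \<open>F1 = 0\<close> show False by simp
qed

lemma linear_homotopy_nonzero:
  fixes F1 x y a d u :: real
  assumes "d \<noteq> 0" "(x, y) \<noteq> (0, 0)" and axis: "x = 0 \<Longrightarrow> a * y * F1 > 0" and "0 \<le> u" "u \<le> 1"
  shows "(1 - u) * F1 + u * (a * y) \<noteq> 0 \<or> (1 - u) * (d * x ^ 3) + u * (d * x) \<noteq> 0"
proof (cases "x = 0")
  case True
  have "a * y * ((1 - u) * F1 + u * (a * y)) = (1 - u) * (a * y * F1) + u * (a * y)\<^sup>2"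
    by (simp add: algebra_simps power2_eq_square)
  also have "\<dots> > 0"
  proof (cases "u = 0")
    case False
    moreover have "a * y \<noteq> 0" using axis[OF True] by auto
    ultimately have "u * (a * y)\<^sup>2 > 0" using assms(4) by simp
    moreover have "(1 - u) * (a * y * F1) \<ge> 0" using axis[OF True] assms(5) by simp
    ultimately show ?thesis by linarith
  qed (use axis[OF True] in simp)
  finally show ?thesis by auto
next
  case False
  have "(1 - u) * x\<^sup>2 + u > 0"
    using False assms(4,5) by (cases "u = 0") (auto simp: add_nonneg_pos)
  then have "d * x * ((1 - u) * x\<^sup>2 + u) \<noteq> 0" using assms(1) False by simp
  moreover have "d * x * ((1 - u) * x\<^sup>2 + u) = (1 - u) * (d * x ^ 3) + u * (d * x)"
    by (simp add: algebra_simps power3_eq_cube power2_eq_square)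
  ultimately show ?thesis by simp
qed

lemma local_degree_cusp_model:
  assumes "continuous_on UNIV f1" "continuous_on UNIV f2" and "a \<noteq> 0" "d \<noteq> 0" "r0 > 0"
    and est: "\<And>x y. \<bar>x\<bar> \<le> r0 \<Longrightarrow> \<bar>y\<bar> \<le> r0 \<Longrightarrow> f1 (x, y) = 0 \<Longrightarrow>
      \<bar>f2 (x, y) - d * x ^ 3\<bar> \<le> \<bar>d\<bar> / 2 * \<bar>x\<bar> ^ 3"
    and axis: "\<And>y. \<bar>y\<bar> \<le> r0 \<Longrightarrow> y \<noteq> 0 \<Longrightarrow> a * y * f1 (0, y) > 0"
  shows "local_degree f1 f2 = (if a * d > 0 then -1 else 1)"
proof (rule local_degree_eqI[OF \<open>r0 > 0\<close>])
  fix r :: real assume r: "0 < r" "r < r0"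
  have circle: "\<bar>x\<bar> \<le> r0" "\<bar>y\<bar> \<le> r0" "(x, y) \<noteq> (0, 0)" if "x\<^sup>2 + y\<^sup>2 = r\<^sup>2" for x y
  proof -
    have "x\<^sup>2 \<le> r\<^sup>2" "y\<^sup>2 \<le> r\<^sup>2" using that zero_le_power2[of x] zero_le_power2[of y] by linarith+
    then have "\<bar>x\<bar> \<le> r" "\<bar>y\<bar> \<le> r"
      using abs_le_square_iff[of x r] abs_le_square_iff[of y r] r(1) by auto
    then show "\<bar>x\<bar> \<le> r0" "\<bar>y\<bar> \<le> r0" using r by auto
    show "(x, y) \<noteq> (0, 0)" using that r(1) by auto
  qed
  have "winding_number (circle_image f1 f2 r) 0
      = winding_number (circle_image f1 (\<lambda>p. d * fst p ^ 3) r) 0"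
  proof (rule winding_number_circle_image_eq)
    fix x y u :: real assume xyu: "x\<^sup>2 + y\<^sup>2 = r\<^sup>2" "0 \<le> u" "u \<le> 1"
    note xy = circle[OF xyu(1)]
    have "f1 (x, y) \<noteq> 0 \<or> (1 - u) * f2 (x, y) + u * (d * x ^ 3) \<noteq> 0"
    proof (rule cubic_homotopy_nonzero[OF \<open>d \<noteq> 0\<close> est[OF xy(1,2)]])
      show "f1 (x, y) = 0 \<Longrightarrow> x \<noteq> 0" using axis[OF xy(2)] xy(3) by auto
    qed (use xyu in auto)
    moreover have "(1 - u) * f1 (x, y) + u * f1 (x, y) = f1 (x, y)" by (simp add: algebra_simps)
    ultimately show "(1 - u) * f1 (x, y) + u * f1 (x, y) \<noteq> 0
        \<or> (1 - u) * f2 (x, y) + u * (d * fst (x, y) ^ 3) \<noteq> 0" by simp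
  qed (use assms(1,2) in \<open>auto intro!: continuous_intros\<close>)
  also have "\<dots> = winding_number (circle_image (\<lambda>p. a * snd p) (\<lambda>p. d * fst p) r) 0"
  proof (rule winding_number_circle_image_eq)
    fix x y u :: real assume xyu: "x\<^sup>2 + y\<^sup>2 = r\<^sup>2" "0 \<le> u" "u \<le> 1"
    note xy = circle[OF xyu(1)]
    show "(1 - u) * f1 (x, y) + u * (a * snd (x, y)) \<noteq> 0
        \<or> (1 - u) * (d * fst (x, y) ^ 3) + u * (d * fst (x, y)) \<noteq> 0"
      unfolding fst_conv snd_conv
    proof (rule linear_homotopy_nonzero[OF \<open>d \<noteq> 0\<close> xy(3) _ xyu(2,3)])
      show "x = 0 \<Longrightarrow> a * y * f1 (x, y) > 0" using axis[OF xy(2)] xy(3) by auto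
    qed
  qed (use assms(1) in \<open>auto intro!: continuous_intros\<close>)
  also have "\<dots> = (if a * d > 0 then -1 else 1)"
    using winding_number_circle_image_swap[OF r(1)] assms(3,4) by simp
  finally show "winding_number (circle_image f1 f2 r) 0 = of_int (if a * d > 0 then -1 else 1)"
    by simp
qed

lemma jac_eq: "jac f1 f2 = (\<lambda>p. dx f1 p * dy f2 p - dy f1 p * dx f2 p)"
  by (simp add: jac_def fun_eq_iff)

lemma total_diff_jac:
  assumes "smooth2 f1" "smooth2 f2"
  shows "total_diff (jac f1 f2)" "total_diff (dx (jac f1 f2))" "total_diff (dy (jac f1 f2))"
  using assms unfolding jac_eq
  by (simp_all add: smooth2_D total_diff_mult total_diff_diff total_diff_add)

lemma jac_partials_at_origin:
  assumes "smooth2 f1" "smooth2 f2" and "dx f1 (0, 0) = 0" "dx f2 (0, 0) = 0" "dy f2 (0, 0) = 0"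
  shows "dx (jac f1 f2) (0, 0) = - dy f1 (0, 0) * dx (dx f2) (0, 0)"
    and "dy (jac f1 f2) (0, 0) = - dy f1 (0, 0) * dy (dx f2) (0, 0)"
    and "dx (dx f2) (0, 0) = 0 \<Longrightarrow> dx (dx (jac f1 f2)) (0, 0)
          = 2 * dx (dx f1) (0, 0) * dy (dx f2) (0, 0) - dy f1 (0, 0) * dx (dx (dx f2)) (0, 0)"
  using assms smooth2_mixed_partials[OF assms(2), of "(0, 0)"] unfolding jac_eq
  by (simp_all add: smooth2_D total_diff_mult total_diff_diff total_diff_add)

lemma has_real_derivative_zero_on_open:
  assumes "(f has_real_derivative D) (at t)" "open S" "t \<in> S" "\<And>s. s \<in> S \<Longrightarrow> f s = 0"
  shows "D = 0"
proof -
  have "(f has_real_derivative 0) (at t)"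
    by (rule has_field_derivative_transform_within_open[of "\<lambda>_. 0" _ _ S]) (use assms in auto)
  then show ?thesis using DERIV_unique assms(1) by blast
qed

lemma has_real_derivative_along_graph2:
  assumes "total_diff F" "total_diff (dx F)" "total_diff (dy F)"
    and "(\<phi> has_real_derivative \<phi>' 0) (at 0)" "(\<phi>' has_real_derivative \<phi>'') (at 0)" "\<phi>' 0 = 0"
  shows "((\<lambda>t. dx F (t, \<phi> t) + dy F (t, \<phi> t) * \<phi>' t) has_real_derivative
           dx (dx F) (0, \<phi> 0) + dy F (0, \<phi> 0) * \<phi>'') (at 0)"
  using DERIV_add[OF has_real_derivative_along_graph[OF assms(2,4)]
      DERIV_mult[OF has_real_derivative_along_graph[OF assms(3,4)] assms(5)]] assms(6)
  by (simp add: mult.commute)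

lemma deriv2_along_graph:
  assumes "total_diff F" "total_diff (dx F)" "total_diff (dy F)" and "open S" "0 \<in> S"
    and "\<And>t. t \<in> S \<Longrightarrow> (\<phi> has_real_derivative \<phi>' t) (at t)"
    and "(\<phi>' has_real_derivative \<phi>'') (at 0)" "\<phi>' 0 = 0"
  shows "deriv (deriv (\<lambda>t. F (t, \<phi> t))) 0 = dx (dx F) (0, \<phi> 0) + dy F (0, \<phi> 0) * \<phi>''"
proof -
  have "\<forall>\<^sub>F t in nhds 0. deriv (\<lambda>t. F (t, \<phi> t)) t = dx F (t, \<phi> t) + dy F (t, \<phi> t) * \<phi>' t"
    unfolding eventually_nhds using assms(1,4-6)
    by (intro exI[of _ S]) (auto intro!: DERIV_imp_deriv has_real_derivative_along_graph)
  then have "deriv (deriv (\<lambda>t. F (t, \<phi> t))) 0 = deriv (\<lambda>t. dx F (t, \<phi> t) + dy F (t, \<phi> t) * \<phi>' t) 0"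
    by (rule deriv_cong_ev) simp
  also have "\<dots> = dx (dx F) (0, \<phi> 0) + dy F (0, \<phi> 0) * \<phi>''"
    by (intro DERIV_imp_deriv has_real_derivative_along_graph2[OF assms(1-3) assms(6)[OF assms(5)] assms(7,8)])
  finally show ?thesis .
qed

lemma critical_curve_second_derivatives:
  assumes smooth: "smooth2 f1" "smooth2 f2"
    and d0: "dx f1 (0, 0) = 0" "dx f2 (0, 0) = 0" "dy f2 (0, 0) = 0" "dy f1 (0, 0) \<noteq> 0"
    and J0: "dx (jac f1 f2) (0, 0) = 0" "dy (jac f1 f2) (0, 0) \<noteq> 0"
    and "e > 0" and phi: "smooth1_on {-e<..<e} \<phi>" "\<phi> 0 = 0" "\<forall>t\<in>{-e<..<e}. jac f1 f2 (t, \<phi> t) = 0"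
  shows "dx (dx f2) (0, 0) = 0"
    and "deriv (deriv (\<lambda>t. f1 (t, \<phi> t))) 0 * dy (dx f2) (0, 0) = - 6 * dy f1 (0, 0) * cusp_cubic_coeff f1 f2"
    and "deriv (deriv (\<lambda>t. f2 (t, \<phi> t))) 0 = 0"
proof -
  define S where "S = {-e<..<e}"
  have S: "open S" "0 \<in> S" using \<open>e > 0\<close> by (auto simp: S_def)
  obtain \<phi>' where \<phi>': "\<And>t. t \<in> S \<Longrightarrow> (\<phi> has_real_derivative \<phi>' t) (at t)" and "smooth1_on S \<phi>'"
    using phi(1) unfolding S_def by (cases rule: smooth1_on.cases) auto
  obtain \<phi>'' where "\<And>t. t \<in> S \<Longrightarrow> (\<phi>' has_real_derivative \<phi>'' t) (at t)"
    using \<open>smooth1_on S \<phi>'\<close> by (cases rule: smooth1_on.cases) auto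
  then have \<phi>'': "(\<phi>' has_real_derivative \<phi>'' 0) (at 0)" using S(2) by blast
  define J where "J = jac f1 f2"
  note J = total_diff_jac[OF smooth, folded J_def]
  show A: "dx (dx f2) (0, 0) = 0"
    using J0 jac_partials_at_origin(1)[OF smooth d0(1-3)] d0(4) by simp
  have graph: "dx J (t, \<phi> t) + dy J (t, \<phi> t) * \<phi>' t = 0" if "t \<in> S" for t
    by (rule has_real_derivative_zero_on_open[OF has_real_derivative_along_graph[OF J(1) \<phi>'[OF that]] S(1) that])
      (use phi(3) in \<open>auto simp: S_def J_def\<close>)
  have "\<phi>' 0 = 0" using graph[OF S(2)] phi(2) J0 jac_partials_at_origin(2)[OF smooth d0(1-3)] d0(4) A
    by (simp add: J_def)
  have "dx (dx J) (0, 0) + dy J (0, 0) * \<phi>'' 0 = 0"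
    using has_real_derivative_zero_on_open[OF has_real_derivative_along_graph2[OF J \<phi>'[OF S(2)] \<phi>'' \<open>\<phi>' 0 = 0\<close>] S]
      graph phi(2) by simp
  then have curvature: "dy f1 (0, 0) * dy (dx f2) (0, 0) * \<phi>'' 0
      = 2 * dx (dx f1) (0, 0) * dy (dx f2) (0, 0) - dy f1 (0, 0) * dx (dx (dx f2)) (0, 0)"
    using jac_partials_at_origin[OF smooth d0(1-3)] A by (simp add: J_def)
  have along: "deriv (deriv (\<lambda>t. f (t, \<phi> t))) 0 = dx (dx f) (0, 0) + dy f (0, 0) * \<phi>'' 0"
    if "smooth2 f" for f
    using deriv2_along_graph[OF _ _ _ S \<phi>' \<phi>'' \<open>\<phi>' 0 = 0\<close>] that phi(2) smooth2_D by metis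
  show "deriv (deriv (\<lambda>t. f2 (t, \<phi> t))) 0 = 0"
    using along[OF smooth(2)] A d0 by simp
  have "deriv (deriv (\<lambda>t. f1 (t, \<phi> t))) 0 * dy (dx f2) (0, 0)
      = dx (dx f1) (0, 0) * dy (dx f2) (0, 0) + dy f1 (0, 0) * dy (dx f2) (0, 0) * \<phi>'' 0"
    using along[OF smooth(1)] by (simp add: algebra_simps)
  also have "\<dots> = - 6 * dy f1 (0, 0) * cusp_cubic_coeff f1 f2"
    unfolding curvature cusp_cubic_coeff_def using d0(4) by (simp add: field_simps)
  finally show "deriv (deriv (\<lambda>t. f1 (t, \<phi> t))) 0 * dy (dx f2) (0, 0) = - 6 * dy f1 (0, 0) * cusp_cubic_coeff f1 f2" .
qed

lemma local_degree_cusp_normal_form: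
  assumes smooth: "smooth2 f1" "smooth2 f2" and "f1 (0, 0) = 0" "f2 (0, 0) = 0"
    and "dx f1 (0, 0) = 0" "dx f2 (0, 0) = 0" "dy f2 (0, 0) = 0" "dx (dx f2) (0, 0) = 0"
    and a: "dy f1 (0, 0) \<noteq> 0" and d: "cusp_cubic_coeff f1 f2 \<noteq> 0"
  shows "local_degree f1 f2 = (if dy f1 (0, 0) * cusp_cubic_coeff f1 f2 > 0 then -1 else 1)"
proof -
  define a d where "a = dy f1 (0, 0)" and "d = cusp_cubic_coeff f1 f2"
  obtain C r1 where "r1 > 0" and C: "\<And>x y. \<bar>x\<bar> \<le> r1 \<Longrightarrow> \<bar>y\<bar> \<le> r1 \<Longrightarrow> f1 (x, y) = 0 \<Longrightarrow>
      \<bar>f2 (x, y) - d * x ^ 3\<bar> \<le> C * x ^ 4"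
    using zero_set_cubic_bound[OF assms(1-9)] unfolding d_def by blast
  have "((\<lambda>y. f1 (0, y)) has_real_derivative a) (at 0)"
    unfolding a_def by (rule total_diff_partial_y[OF smooth2_D(1)[OF smooth(1)]])
  then obtain r2 where "r2 > 0" and axis: "\<And>y. \<bar>y\<bar> \<le> r2 \<Longrightarrow> y \<noteq> 0 \<Longrightarrow> a * y * f1 (0, y) > 0"
    using sign_near_simple_zero[of "\<lambda>y. f1 (0, y)"] assms(3) a unfolding a_def by blast
  define r0 where "r0 = min (min r1 r2) (\<bar>d\<bar> / (2 * \<bar>C\<bar> + 1))"
  have "r0 > 0" using \<open>r1 > 0\<close> \<open>r2 > 0\<close> d by (simp add: r0_def d_def)
  have "\<bar>f2 (x, y) - d * x ^ 3\<bar> \<le> \<bar>d\<bar> / 2 * \<bar>x\<bar> ^ 3"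
    if "\<bar>x\<bar> \<le> r0" "\<bar>y\<bar> \<le> r0" "f1 (x, y) = 0" for x y
  proof -
    have "x ^ 4 = \<bar>x\<bar> * \<bar>x\<bar> ^ 3" by (simp add: power_even_abs flip: power_Suc)
    then have "C * x ^ 4 \<le> \<bar>C\<bar> * \<bar>x\<bar> * \<bar>x\<bar> ^ 3"
      by (simp add: mult.assoc mult_right_mono)
    then have "\<bar>f2 (x, y) - d * x ^ 3\<bar> \<le> \<bar>C\<bar> * \<bar>x\<bar> * \<bar>x\<bar> ^ 3"
      using C[of x y] that by (simp add: r0_def)
    also have "\<dots> \<le> \<bar>C\<bar> * (\<bar>d\<bar> / (2 * \<bar>C\<bar> + 1)) * \<bar>x\<bar> ^ 3"
      using that(1) by (intro mult_right_mono mult_left_mono) (auto simp: r0_def)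
    also have "\<dots> \<le> \<bar>d\<bar> / 2 * \<bar>x\<bar> ^ 3"
      by (intro mult_right_mono) (auto simp: field_simps)
    finally show ?thesis .
  qed
  moreover have "continuous_on UNIV f1" "continuous_on UNIV f2"
    using smooth smooth2_D(1) total_diff_continuous_on by blast+
  ultimately show ?thesis
    using local_degree_cusp_model[OF _ _ a d \<open>r0 > 0\<close>] axis
    unfolding a_def[symmetric] d_def[symmetric] by (auto simp: r0_def)
qed

theorem mainTheorem15:
  fixes f1 f2 :: "real \<times> real \<Rightarrow> real" and \<phi> :: "real \<Rightarrow> real" and e :: real
  assumes smooth: "smooth2 f1" "smooth2 f2"
    and gen: "one_generic f1 f2"
    and cusp: "cusp_point f1 f2 (0, 0)"
    and f0: "f1 (0, 0) = 0" "f2 (0, 0) = 0"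
    and d0: "dx f1 (0, 0) = 0" "dx f2 (0, 0) = 0" "dy f2 (0, 0) = 0" "dy f1 (0, 0) \<noteq> 0"
    and J0: "dx (jac f1 f2) (0, 0) = 0" "dy (jac f1 f2) (0, 0) \<noteq> 0"
    and e: "e > 0"
    and phi: "smooth1_on {-e<..<e} \<phi>" "\<phi> 0 = 0"
             "\<forall>t\<in>{-e<..<e}. jac f1 f2 (t, \<phi> t) = 0"
  defines "v1 \<equiv> (deriv (deriv (\<lambda>t. f1 (t, \<phi> t))) 0,
                  deriv (deriv (\<lambda>t. f2 (t, \<phi> t))) 0)"
    and "v2 \<equiv> (dx f1 (0, 0) * dx (jac f1 f2) (0, 0) + dy f1 (0, 0) * dy (jac f1 f2) (0, 0),
               dx f2 (0, 0) * dx (jac f1 f2) (0, 0) + dy f2 (0, 0) * dy (jac f1 f2) (0, 0))"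
  shows "((\<exists>c>0. v1 = (c * fst v2, c * snd v2)) \<longrightarrow> local_degree f1 f2 = -1) \<and>
         ((\<exists>c<0. v1 = (c * fst v2, c * snd v2)) \<longrightarrow> local_degree f1 f2 = 1)"
proof -
  define a B d where "a = dy f1 (0, 0)" and "B = dy (dx f2) (0, 0)" and "d = cusp_cubic_coeff f1 f2"
  note curve = critical_curve_second_derivatives[OF smooth d0 J0 e phi, folded a_def B_def d_def]
  have v2: "v2 = (- a * a * B, 0)"
    using jac_partials_at_origin(2)[OF smooth d0(1-3)] d0 unfolding v2_def a_def B_def by simp
  have "a * B \<noteq> 0" using J0(2) jac_partials_at_origin(2)[OF smooth d0(1-3)] by (simp add: a_def B_def)
  then have "(a * B)\<^sup>2 > 0" by simp
  have degree: "local_degree f1 f2 = (if c > 0 then -1 else 1)" if "c \<noteq> 0" "v1 = (c * fst v2, c * snd v2)" for c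
  proof -
    have "deriv (deriv (\<lambda>t. f1 (t, \<phi> t))) 0 = c * (- a * a * B)" using that(2) by (simp add: v1_def v2)
    then have eq: "c * (a * B)\<^sup>2 = 6 * (a * d)"
      using curve(2) by (simp add: power2_eq_square algebra_simps)
    then have "d \<noteq> 0" using \<open>(a * B)\<^sup>2 > 0\<close> \<open>c \<noteq> 0\<close> by auto
    have "a * d > 0 \<longleftrightarrow> c * (a * B)\<^sup>2 > 0" using eq by linarith
    also have "\<dots> \<longleftrightarrow> c > 0" using \<open>(a * B)\<^sup>2 > 0\<close> by (simp add: zero_less_mult_iff)
    finally have "a * d > 0 \<longleftrightarrow> c > 0" .
    moreover have "local_degree f1 f2 = (if a * d > 0 then -1 else 1)"
      using local_degree_cusp_normal_form[OF smooth f0 d0(1-3) curve(1) d0(4)] \<open>d \<noteq> 0\<close>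
      unfolding a_def d_def by blast
    ultimately show ?thesis by simp
  qed
  show ?thesis
  proof (intro conjI impI; elim exE conjE)
    fix c assume "c > 0" "v1 = (c * fst v2, c * snd v2)"
    then show "local_degree f1 f2 = -1" using degree[of c] by simp
  next
    fix c assume "c < 0" "v1 = (c * fst v2, c * snd v2)"
    then show "local_degree f1 f2 = 1" using degree[of c] by simp
  qed
qed

end
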